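(* Let $k<m\le kn$ be positive integers and let $I$ be an instance with $n$ agents and $m$ goods in a single category with cardinality constraint $k$, where each agent $i$ has an additive utility function $u_i:2^M\to\mathbb{R}_{\ge0}$ with $u_i(\emptyset)=0$ (not necessarily normalized). Let $\mathcal{A}^*=(A^*_1,\dots,A^*_n)$ be an allocation maximizing $\sum_i u_i(A_i)$ and let $S=\{i: |A^*_i|>k\}$. Suppose $0<u_i(M)\le 1$ for each $i\in S$ and $\sum_{i\in N\setminus S}u_i(A^*_i)\ge 1$. Then $$\frac{\text{OPT-USW}(I)}{\max_{\mathcal{A}\in \mathcal{C}_k(I)}\text{USW}(\mathcal{A})}\le \frac{1+\sum_{i\in S}u_i(A^*_i)}{1+k\sum_{i\in S}\frac{u_i(A^*_i)}{|A^*_i|}}\le \frac{1+s}{1+\frac{ks^2}{m-1}},$$ where $s=-1+\sqrt{1+\frac{m-1}{k}}$.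
   Context: An allocation is a partition $(A_1,\dots,A_n)$ of the goods $M$, agent $i$ receiving $A_i$; it is cardinal if $|A_i|\le k$ for all $i$, and $\mathcal{C}_k(I)$ denotes the set of cardinal allocations. $\text{USW}(\mathcal{A})=\sum_i u_i(A_i)$ and $\text{OPT-USW}(I)=\text{USW}(\mathcal{A}^* )$ is its maximum over all allocations. *)

theory Defs
  imports "HOL-Library.FuncSet" Complex_Main
begin

(* Agents are 0..<n, goods are M = {0..<m}; agent i values good g at v i g >= 0.
   Additive utility: u_i(A) = sum of v i g over g in A (so u_i({}) = 0). *)
definition util :: "(nat \<Rightarrow> nat \<Rightarrow> real) \<Rightarrow> nat \<Rightarrow> nat set \<Rightarrow> real" where
  "util v i A = (\<Sum>g\<in>A. v i g)"

definition is_alloc :: "nat \<Rightarrow> nat \<Rightarrow> (nat \<Rightarrow> nat set) \<Rightarrow> bool" where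
  "is_alloc n m A \<longleftrightarrow> A \<in> {..<n} \<rightarrow>\<^sub>E Pow {..<m}
     \<and> (\<Union>i<n. A i) = {..<m}
     \<and> (\<forall>i<n. \<forall>j<n. i \<noteq> j \<longrightarrow> A i \<inter> A j = {})"

definition is_cardinal_alloc :: "nat \<Rightarrow> nat \<Rightarrow> nat \<Rightarrow> (nat \<Rightarrow> nat set) \<Rightarrow> bool" where
  "is_cardinal_alloc n m k A \<longleftrightarrow> is_alloc n m A \<and> (\<forall>i<n. card (A i) \<le> k)"

definition USW :: "(nat \<Rightarrow> nat \<Rightarrow> real) \<Rightarrow> nat \<Rightarrow> (nat \<Rightarrow> nat set) \<Rightarrow> real" where
  "USW v n A = (\<Sum>i<n. util v i (A i))"

definition OPT_USW :: "(nat \<Rightarrow> nat \<Rightarrow> real) \<Rightarrow> nat \<Rightarrow> nat \<Rightarrow> real" where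
  "OPT_USW v n m = Max {USW v n A | A. is_alloc n m A}"

definition max_cardinal_USW :: "(nat \<Rightarrow> nat \<Rightarrow> real) \<Rightarrow> nat \<Rightarrow> nat \<Rightarrow> nat \<Rightarrow> real" where
  "max_cardinal_USW v n m k = Max {USW v n A | A. is_cardinal_alloc n m k A}"

end

theory Submission
  imports Defs "HOL-Analysis.Convex"
begin

(* Let S be the agents whose optimal bundle exceeds k goods, \<sigma> = \<Sum>_{i\<in>S} u_i(A*_i),
   \<tau> = \<Sum>_{i\<in>S} u_i(A*_i)/|A*_i|, and R \<ge> 1 the welfare of the other agents, so OPT = R + \<sigma>.
   Cutting each bundle of S down to its k best goods keeps at least the fraction k/|A*_i| of its
   value, and since m \<le> kn the cut-down partial allocation extends to a cardinal one; so the best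
   cardinal welfare is at least R + k\<tau>, and R \<ge> 1, k\<tau> \<le> \<sigma> give the first inequality.
   Some good lies outside the bundles of S, so \<Sum>_{i\<in>S} |A*_i| \<le> m - 1, and Cauchy-Schwarz with
   u_i \<le> 1 yields \<sigma>^2 \<le> (m - 1) \<tau>. The resulting bound (1 + \<sigma>) / (1 + k \<sigma>^2 / (m - 1)) is
   maximal at \<sigma> = s. *)

lemma sum_squared_le_sum_div_mult_sum:
  fixes u c :: "'a \<Rightarrow> real"
  assumes "\<And>i. i \<in> I \<Longrightarrow> 0 < c i"
  shows "(\<Sum>i\<in>I. u i)\<^sup>2 \<le> (\<Sum>i\<in>I. (u i)\<^sup>2 / c i) * (\<Sum>i\<in>I. c i)"
proof -
  have c_ne: "\<And>i. i \<in> I \<Longrightarrow> c i \<noteq> 0" using assms by force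
  have "(\<Sum>i\<in>I. u i) = (\<Sum>i\<in>I. u i / sqrt (c i) * sqrt (c i))"
    by (intro sum.cong refl) (simp add: c_ne)
  moreover have "(\<Sum>i\<in>I. (u i)\<^sup>2 / c i) = (\<Sum>i\<in>I. (u i / sqrt (c i))\<^sup>2)"
    by (intro sum.cong refl) (simp add: assms less_imp_le power_divide)
  moreover have "(\<Sum>i\<in>I. c i) = (\<Sum>i\<in>I. (sqrt (c i))\<^sup>2)"
    by (intro sum.cong refl) (simp add: assms less_imp_le)
  ultimately show ?thesis by (simp only: Cauchy_Schwarz_ineq_sum)
qed

lemma sum_squared_le_sum_divide_mult_bound:
  fixes u c :: "'a \<Rightarrow> real"
  assumes "\<And>i. i \<in> I \<Longrightarrow> 0 \<le> u i \<and> u i \<le> 1" "\<And>i. i \<in> I \<Longrightarrow> 0 < c i"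
    and "(\<Sum>i\<in>I. c i) \<le> M"
  shows "(\<Sum>i\<in>I. u i)\<^sup>2 \<le> (\<Sum>i\<in>I. u i / c i) * M"
proof -
  have "(\<Sum>i\<in>I. u i)\<^sup>2 \<le> (\<Sum>i\<in>I. (u i)\<^sup>2 / c i) * (\<Sum>i\<in>I. c i)"
    using assms(2) by (rule sum_squared_le_sum_div_mult_sum)
  also have "\<dots> \<le> (\<Sum>i\<in>I. u i / c i) * M"
  proof (rule mult_mono)
    show "(\<Sum>i\<in>I. (u i)\<^sup>2 / c i) \<le> (\<Sum>i\<in>I. u i / c i)"
      using assms(1,2)
      by (intro sum_mono divide_right_mono) (auto simp: power2_eq_square mult_left_le less_imp_le)
    show "0 \<le> (\<Sum>i\<in>I. u i / c i)"
      by (intro sum_nonneg divide_nonneg_pos) (simp_all add: assms)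
    show "0 \<le> (\<Sum>i\<in>I. c i)" by (meson assms(2) less_imp_le sum_nonneg)
  qed (use assms(3) in auto)
  finally show ?thesis .
qed

lemma exists_subset_card_sum_ge_average:
  fixes f :: "'a \<Rightarrow> real"
  assumes "finite A" "k \<le> card A"
  shows "\<exists>B\<subseteq>A. card B = k \<and> real k / real (card A) * sum f A \<le> sum f B"
  using assms
proof (induction "card A - k" arbitrary: A)
  case 0
  then show ?case by (intro exI[of _ A]) auto
next
  case (Suc d)
  then have "A \<noteq> {}" by auto
  then have "Min (f ` A) \<in> f ` A" using Suc.prems by (intro Min_in) auto
  \<comment> \<open>a least valuable element is worth at most the average, so dropping it keeps the bound\<close>
  then obtain g where g: "g \<in> A" "f g = Min (f ` A)" by auto
  then have g_min: "\<And>x. x \<in> A \<Longrightarrow> f g \<le> f x"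
    using Suc.prems by simp
  define c where "c = real (card A)"
  have "k < card A" using Suc.hyps by linarith
  then have card_rem: "card (A - {g}) = card A - 1" "real (card (A - {g})) = c - 1"
    using g Suc.prems by (auto simp: c_def of_nat_diff)
  then obtain B where B: "B \<subseteq> A - {g}" "card B = k"
      "real k / (c - 1) * sum f (A - {g}) \<le> sum f B"
    using Suc.hyps(1)[of "A - {g}"] Suc.hyps(2) Suc.prems \<open>k < card A\<close> by fastforce
  have sum_rem: "sum f A = f g + sum f (A - {g})"
    using g Suc.prems by (simp add: sum.remove)
  have "c * f g \<le> sum f A"
    using sum_bounded_below[of A "f g" f] g_min by (simp add: c_def)
  then have "(c - 1) * sum f A \<le> c * sum f (A - {g})"
    by (simp add: sum_rem algebra_simps)
  have "real k / c * sum f A \<le> real k / (c - 1) * sum f (A - {g})"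
  proof (cases "k = 0")
    case False
    then have "c > 1" using \<open>k < card A\<close> by (simp add: c_def)
    with \<open>(c - 1) * sum f A \<le> c * sum f (A - {g})\<close>
    have "sum f A / c \<le> sum f (A - {g}) / (c - 1)"
      by (simp add: field_simps)
    then have "real k * (sum f A / c) \<le> real k * (sum f (A - {g}) / (c - 1))"
      by (rule mult_left_mono) simp
    then show ?thesis by simp
  qed simp
  then show ?case using B by (auto simp: c_def)
qed

lemma add_divide_add_le_one_add_divide:
  fixes R a b :: real
  assumes "1 \<le> R" "0 \<le> b" "b \<le> a"
  shows "(R + a) / (R + b) \<le> (1 + a) / (1 + b)"
proof -
  have "(R - 1) * b \<le> (R - 1) * a" using assms by (intro mult_left_mono) auto
  then have "(R + a) * (1 + b) \<le> (1 + a) * (R + b)" by (simp add: algebra_simps)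
  then show ?thesis using assms by (simp add: divide_simps)
qed

lemma linear_div_quadratic_le_critical_value:
  fixes K M x :: real
  assumes "0 < K" "0 < M" "0 \<le> x"
  shows "(1 + x) / (1 + K * x\<^sup>2 / M) \<le>
     (let s = -1 + sqrt (1 + M / K) in (1 + s) / (1 + K * s\<^sup>2 / M))"
proof -
  define a where "a = K / M"
  define s where "s = -1 + sqrt (1 + M / K)"
  have "0 < a" using assms by (simp add: a_def)
  have "0 \<le> s" unfolding s_def using assms by simp
  have "(1 + s)\<^sup>2 = 1 + M / K" using assms by (simp add: s_def)
  then have critical: "a * s\<^sup>2 + 2 * a * s = 1"
    using assms unfolding a_def by (simp add: field_simps power2_eq_square)
  \<comment> \<open>by the choice of s, the cross-multiplied difference is a perfect square\<close>
  have "(1 + s) * (1 + a * x\<^sup>2) - (1 + x) * (1 + a * s\<^sup>2) = (1 + s) * a * (x - s)\<^sup>2"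
  proof -
    have "(1 + s) * (1 + a * x\<^sup>2) - (1 + x) * (1 + a * s\<^sup>2)
        = (1 + s) * a * (x - s)\<^sup>2 + (x - s) * (a * s\<^sup>2 + 2 * a * s - 1)"
      by (simp add: algebra_simps power2_eq_square)
    then show ?thesis using critical by simp
  qed
  moreover have "0 \<le> (1 + s) * a * (x - s)\<^sup>2" using \<open>0 \<le> s\<close> \<open>0 < a\<close> by simp
  ultimately have "(1 + x) * (1 + a * s\<^sup>2) \<le> (1 + s) * (1 + a * x\<^sup>2)" by linarith
  moreover have "0 < 1 + a * x\<^sup>2" "0 < 1 + a * s\<^sup>2" using \<open>0 < a\<close> by (auto intro: add_pos_nonneg)
  ultimately have "(1 + x) / (1 + a * x\<^sup>2) \<le> (1 + s) / (1 + a * s\<^sup>2)"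
    by (simp add: divide_simps)
  then show ?thesis by (simp add: a_def s_def Let_def)
qed

lemma one_add_divide_le_critical_value:
  fixes K M x t :: real
  assumes "0 < K" "0 < M" "0 \<le> x" "0 \<le> t" "x\<^sup>2 \<le> t * M"
  shows "(1 + x) / (1 + K * t) \<le>
     (let s = -1 + sqrt (1 + M / K) in (1 + s) / (1 + K * s\<^sup>2 / M))"
proof -
  have "K * x\<^sup>2 / M \<le> K * t"
    using assms by (simp add: divide_le_eq mult_left_mono mult.assoc)
  moreover have "0 \<le> K * x\<^sup>2 / M" "0 \<le> K * t" using assms by simp_all
  ultimately have "(1 + x) / (1 + K * t) \<le> (1 + x) / (1 + K * x\<^sup>2 / M)"
    using assms by (intro divide_left_mono) (auto intro!: mult_pos_pos add_pos_nonneg)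
  also have "\<dots> \<le> (let s = -1 + sqrt (1 + M / K) in (1 + s) / (1 + K * s\<^sup>2 / M))"
    using assms by (intro linear_div_quadratic_le_critical_value)
  finally show ?thesis .
qed

lemma util_nonneg: "(\<And>g. g \<in> B \<Longrightarrow> 0 \<le> v i g) \<Longrightarrow> 0 \<le> util v i B"
  unfolding util_def by (rule sum_nonneg)

lemma util_mono:
  "finite C \<Longrightarrow> B \<subseteq> C \<Longrightarrow> (\<And>g. g \<in> C \<Longrightarrow> 0 \<le> v i g) \<Longrightarrow> util v i B \<le> util v i C"
  unfolding util_def by (rule sum_mono2) auto

lemma is_alloc_subset: "is_alloc n m A \<Longrightarrow> i < n \<Longrightarrow> A i \<subseteq> {..<m}"
  unfolding is_alloc_def by auto

lemma is_alloc_disjoint: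
  "is_alloc n m A \<Longrightarrow> i < n \<Longrightarrow> j < n \<Longrightarrow> i \<noteq> j \<Longrightarrow> A i \<inter> A j = {}"
  unfolding is_alloc_def by auto

lemma util_bundle_nonneg:
  assumes "is_alloc n m A" "\<And>i g. i < n \<Longrightarrow> g < m \<Longrightarrow> 0 \<le> v i g" "i < n"
  shows "0 \<le> util v i (A i)"
  using is_alloc_subset[OF assms(1,3)] assms(2,3) by (intro util_nonneg) auto

lemma util_bundle_le_util_goods:
  assumes "is_alloc n m A" "\<And>i g. i < n \<Longrightarrow> g < m \<Longrightarrow> 0 \<le> v i g" "i < n"
  shows "util v i (A i) \<le> util v i {..<m}"
  using is_alloc_subset[OF assms(1,3)] assms(2,3) by (intro util_mono) auto

lemma finite_USW_allocs: "finite {USW v n A | A. is_alloc n m A}"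
proof -
  have "{USW v n A | A. is_alloc n m A} \<subseteq> USW v n ` ({..<n} \<rightarrow>\<^sub>E Pow {..<m})"
    unfolding is_alloc_def by auto
  then show ?thesis by (rule finite_subset) (simp add: finite_PiE)
qed

lemma OPT_USW_eq:
  assumes "is_alloc n m A" "\<And>B. is_alloc n m B \<Longrightarrow> USW v n B \<le> USW v n A"
  shows "OPT_USW v n m = USW v n A"
  unfolding OPT_USW_def using assms by (intro Max_eqI[OF finite_USW_allocs]) auto

lemma USW_le_max_cardinal_USW:
  assumes "is_cardinal_alloc n m k A"
  shows "USW v n A \<le> max_cardinal_USW v n m k"
proof -
  have "finite {USW v n A | A. is_cardinal_alloc n m k A}"
    by (rule finite_subset[OF _ finite_USW_allocs]) (auto simp: is_cardinal_alloc_def)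
  then show ?thesis
    unfolding max_cardinal_USW_def using assms by (intro Max_ge) auto
qed

lemma sum_card_bundles_less:
  assumes A: "is_alloc n m A" and "S \<subseteq> {..<n}" "j < n" "j \<notin> S" "A j \<noteq> {}"
  shows "(\<Sum>i\<in>S. card (A i)) < m"
proof -
  have fin: "finite (A i)" if "i < n" for i
    using is_alloc_subset[OF A that] by (rule finite_subset) simp
  have "(\<Sum>i\<in>S. card (A i)) = card (\<Union>i\<in>S. A i)"
  proof (rule card_UN_disjoint[symmetric])
    show "finite S" using \<open>S \<subseteq> {..<n}\<close> by (rule finite_subset) simp
    show "\<forall>i\<in>S. finite (A i)" using fin \<open>S \<subseteq> {..<n}\<close> by blast
    show "\<forall>i\<in>S. \<forall>j\<in>S. i \<noteq> j \<longrightarrow> A i \<inter> A j = {}"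
      using is_alloc_disjoint[OF A] \<open>S \<subseteq> {..<n}\<close> by blast
  qed
  also have "\<dots> < card {..<m}"
  proof (rule psubset_card_mono)
    show "(\<Union>i\<in>S. A i) \<subset> {..<m}"
      using assms is_alloc_subset[OF A] is_alloc_disjoint[OF A, of j] by blast
  qed simp
  finally show ?thesis by simp
qed

lemma exists_bundle_below_capacity:
  assumes B: "\<And>i. i < n \<Longrightarrow> B i \<subseteq> {..<m}" "\<And>i. i < n \<Longrightarrow> card (B i) \<le> k"
      "\<And>i j. i < n \<Longrightarrow> j < n \<Longrightarrow> i \<noteq> j \<Longrightarrow> B i \<inter> B j = {}"
    and "m \<le> k * n" and "(\<Union>i<n. B i) \<noteq> {..<m}"
  shows "\<exists>i<n. card (B i) < k"
proof (rule ccontr)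
  assume "\<not> (\<exists>i<n. card (B i) < k)"
  then have full: "\<And>i. i < n \<Longrightarrow> card (B i) = k"
    using B(2) by (meson le_neq_implies_less)
  have "k * n = (\<Sum>i<n. card (B i))" by (simp add: full)
  also have "\<dots> = card (\<Union>i<n. B i)"
    using B by (intro card_UN_disjoint[symmetric]) (auto intro: finite_subset)
  also have "\<dots> < card {..<m}"
    using B(1) assms(5) by (intro psubset_card_mono) auto
  finally show False using \<open>m \<le> k * n\<close> by simp
qed

lemma partial_cardinal_alloc_extends:
  assumes "\<And>i. i < n \<Longrightarrow> B i \<subseteq> {..<m}" "\<And>i. i < n \<Longrightarrow> card (B i) \<le> k"
      "\<And>i j. i < n \<Longrightarrow> j < n \<Longrightarrow> i \<noteq> j \<Longrightarrow> B i \<inter> B j = {}"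
    and "m \<le> k * n"
  shows "\<exists>A. is_cardinal_alloc n m k A \<and> (\<forall>i<n. B i \<subseteq> A i)"
  using assms(1-3)
proof (induction "m - card (\<Union>i<n. B i)" arbitrary: B rule: less_induct)
  case less
  have covered: "(\<Union>i<n. B i) \<subseteq> {..<m}" using less.prems(1) by blast
  show ?case
  proof (cases "(\<Union>i<n. B i) = {..<m}")
    case True
    then have "is_cardinal_alloc n m k (restrict B {..<n})"
      using less.prems unfolding is_cardinal_alloc_def is_alloc_def by auto
    then show ?thesis by auto
  next
    case False
    then obtain g where g: "g < m" "g \<notin> (\<Union>i<n. B i)" using covered by auto
    obtain i where i: "i < n" "card (B i) < k"
      using exists_bundle_below_capacity[OF less.prems \<open>m \<le> k * n\<close> False] by blast
    define B' where "B' = B(i := insert g (B i))"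
    have union': "(\<Union>j<n. B' j) = insert g (\<Union>j<n. B j)"
      using i unfolding B'_def by auto
    have "card (\<Union>j<n. B' j) = Suc (card (\<Union>j<n. B j))"
      unfolding union' using g covered by (subst card_insert_disjoint) (auto intro: finite_subset)
    moreover have "card (\<Union>j<n. B' j) \<le> m"
      unfolding union' using g covered
      by (metis card_lessThan card_mono finite_lessThan insert_subset lessThan_iff)
    ultimately have "m - card (\<Union>j<n. B' j) < m - card (\<Union>j<n. B j)" by linarith
    moreover have "B' j \<subseteq> {..<m}" if "j < n" for j
      using less.prems(1) i g that unfolding B'_def by auto
    moreover have "card (B' j) \<le> k" if "j < n" for j
      using less.prems(2) i that unfolding B'_def by (auto intro: card_insert_le_m1)
    moreover have "B' j \<inter> B' l = {}" if "j < n" "l < n" "j \<noteq> l" for j l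
      using less.prems(3) g i that unfolding B'_def by auto
    ultimately obtain A where "is_cardinal_alloc n m k A" "\<forall>j<n. B' j \<subseteq> A j"
      using less.hyps by blast
    moreover have "B j \<subseteq> B' j" for j unfolding B'_def by auto
    ultimately show ?thesis by blast
  qed
qed

lemma max_cardinal_USW_ge_scaled_bundles:
  assumes A: "is_alloc n m A" and "m \<le> k * n"
    and nonneg: "\<And>i g. i < n \<Longrightarrow> g < m \<Longrightarrow> 0 \<le> v i g"
  shows "(\<Sum>i<n. if k < card (A i) then real k / real (card (A i)) * util v i (A i)
                 else util v i (A i)) \<le> max_cardinal_USW v n m k"
    (is "(\<Sum>i<n. ?w i) \<le> _")
proof -
  have "\<exists>B. i < n \<longrightarrow> B \<subseteq> A i \<and> card B \<le> k \<and> ?w i \<le> util v i B" for i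
  proof (cases "i < n \<and> k < card (A i)")
    case True
    then have "A i \<subseteq> {..<m}" using is_alloc_subset[OF A] by blast
    then have "finite (A i)" by (rule finite_subset) simp
    then obtain B where "B \<subseteq> A i" "card B = k"
        "real k / real (card (A i)) * sum (v i) (A i) \<le> sum (v i) B"
      using exists_subset_card_sum_ge_average[of "A i" k "v i"] True by (meson less_imp_le)
    then show ?thesis using True by (intro exI[of _ B]) (simp add: util_def)
  next
    case False
    then show ?thesis by (intro exI[of _ "A i"]) auto
  qed
  from choice[OF allI[OF this]] obtain B
    where B: "\<forall>i. i < n \<longrightarrow> B i \<subseteq> A i \<and> card (B i) \<le> k \<and> ?w i \<le> util v i (B i)" ..
  have B_sub: "B i \<subseteq> {..<m}" if "i < n" for i using B is_alloc_subset[OF A] that by blast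
  have B_card: "card (B i) \<le> k" if "i < n" for i using B that by blast
  have B_disj: "B i \<inter> B j = {}" if "i < n" "j < n" "i \<noteq> j" for i j
    using B is_alloc_disjoint[OF A] that by blast
  obtain C where C: "is_cardinal_alloc n m k C" "\<forall>i<n. B i \<subseteq> C i"
    using partial_cardinal_alloc_extends[where B = B, OF B_sub B_card B_disj \<open>m \<le> k * n\<close>]
    by blast
  have "(\<Sum>i<n. ?w i) \<le> (\<Sum>i<n. util v i (C i))"
  proof (rule sum_mono)
    fix i assume "i \<in> {..<n}"
    then have i: "i < n" by simp
    have C_sub: "C i \<subseteq> {..<m}"
      using is_alloc_subset[of n m C] C(1) i unfolding is_cardinal_alloc_def by blast
    then have "finite (C i)" by (rule finite_subset) simp
    then have "util v i (B i) \<le> util v i (C i)"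
      using C(2) C_sub i nonneg by (intro util_mono) auto
    then show "?w i \<le> util v i (C i)" using B i by auto
  qed
  also have "\<dots> \<le> max_cardinal_USW v n m k"
    using USW_le_max_cardinal_USW[OF C(1)] by (simp add: USW_def)
  finally show ?thesis .
qed

lemma OPT_USW_div_max_cardinal_USW_le:
  fixes v :: "nat \<Rightarrow> nat \<Rightarrow> real" and Aopt :: "nat \<Rightarrow> nat set"
  assumes "m \<le> k * n"
    and nonneg: "\<And>i g. i < n \<Longrightarrow> g < m \<Longrightarrow> 0 \<le> v i g"
    and opt_alloc: "is_alloc n m Aopt"
    and opt: "\<And>A. is_alloc n m A \<Longrightarrow> USW v n A \<le> USW v n Aopt"
    and rest: "1 \<le> (\<Sum>i \<in> {i. i < n \<and> \<not> k < card (Aopt i)}. util v i (Aopt i))"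
  shows "OPT_USW v n m / max_cardinal_USW v n m k
           \<le> (1 + (\<Sum>i \<in> {i. i < n \<and> k < card (Aopt i)}. util v i (Aopt i)))
             / (1 + real k * (\<Sum>i \<in> {i. i < n \<and> k < card (Aopt i)}.
                                  util v i (Aopt i) / real (card (Aopt i))))"
proof -
  define S where "S = {i. i < n \<and> k < card (Aopt i)}"
  define T where "T = {i. i < n \<and> \<not> k < card (Aopt i)}"
  define \<sigma> where "\<sigma> = (\<Sum>i\<in>S. util v i (Aopt i))"
  define \<tau> where "\<tau> = (\<Sum>i\<in>S. util v i (Aopt i) / real (card (Aopt i)))"
  define R where "R = (\<Sum>i\<in>T. util v i (Aopt i))"
  have split: "(\<Sum>i<n. if k < card (Aopt i) then f i else g i) = sum f S + sum g T"
    for f g :: "nat \<Rightarrow> real"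
    unfolding S_def T_def by (simp add: sum.If_cases lessThan_def Collect_conj_eq Compl_eq)
  have "1 \<le> R" using rest by (simp add: R_def T_def)
  have OPT: "OPT_USW v n m = R + \<sigma>"
    using OPT_USW_eq[OF opt_alloc opt]
      split[of "\<lambda>i. util v i (Aopt i)" "\<lambda>i. util v i (Aopt i)", unfolded if_cancel]
    by (simp add: USW_def \<sigma>_def R_def add.commute)
  have MC: "R + real k * \<tau> \<le> max_cardinal_USW v n m k"
    using max_cardinal_USW_ge_scaled_bundles[OF opt_alloc \<open>m \<le> k * n\<close> nonneg] split
    by (simp add: \<tau>_def R_def sum_distrib_left add.commute)
  have in_S: "0 \<le> util v i (Aopt i)" "k < card (Aopt i)" if "i \<in> S" for i
    using that util_bundle_nonneg[OF opt_alloc nonneg] by (auto simp: S_def)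
  have "0 \<le> real k * \<tau>" using in_S unfolding \<tau>_def by (intro mult_nonneg_nonneg sum_nonneg) auto
  have "real k * \<tau> \<le> \<sigma>"
    unfolding \<tau>_def \<sigma>_def sum_distrib_left
  proof (rule sum_mono)
    fix i assume "i \<in> S"
    then have "real k / real (card (Aopt i)) \<le> 1" "0 \<le> util v i (Aopt i)"
      using in_S[OF \<open>i \<in> S\<close>] by (simp_all add: divide_le_eq_1)
    then show "real k * (util v i (Aopt i) / real (card (Aopt i))) \<le> util v i (Aopt i)"
      using mult_right_mono[of "real k / real (card (Aopt i))" 1 "util v i (Aopt i)"] by simp
  qed
  have "OPT_USW v n m / max_cardinal_USW v n m k \<le> (R + \<sigma>) / (R + real k * \<tau>)"
    unfolding OPT using MC \<open>1 \<le> R\<close> \<open>0 \<le> real k * \<tau>\<close> \<open>real k * \<tau> \<le> \<sigma>\<close>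
    by (intro divide_left_mono) auto
  also have "\<dots> \<le> (1 + \<sigma>) / (1 + real k * \<tau>)"
    using \<open>1 \<le> R\<close> \<open>0 \<le> real k * \<tau>\<close> \<open>real k * \<tau> \<le> \<sigma>\<close>
    by (rule add_divide_add_le_one_add_divide)
  finally show ?thesis unfolding \<sigma>_def \<tau>_def S_def .
qed

theorem lemma3:
  fixes n m k :: nat and v :: "nat \<Rightarrow> nat \<Rightarrow> real" and Aopt :: "nat \<Rightarrow> nat set"
  assumes "0 < k" and "0 < n" and "k < m" and "m \<le> k * n"
    and nonneg: "\<And>i g. i < n \<Longrightarrow> g < m \<Longrightarrow> v i g \<ge> 0"
    and opt_alloc: "is_alloc n m Aopt"
    and opt: "\<And>A. is_alloc n m A \<Longrightarrow> USW v n A \<le> USW v n Aopt"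
    and S_bound: "\<And>i. i \<in> {i. i < n \<and> card (Aopt i) > k} \<Longrightarrow>
                     0 < util v i {..<m} \<and> util v i {..<m} \<le> 1"
    and rest: "(\<Sum>i \<in> {i. i < n \<and> \<not> card (Aopt i) > k}. util v i (Aopt i)) \<ge> 1"
  shows "OPT_USW v n m / max_cardinal_USW v n m k
           \<le> (1 + (\<Sum>i \<in> {i. i < n \<and> card (Aopt i) > k}. util v i (Aopt i)))
             / (1 + real k * (\<Sum>i \<in> {i. i < n \<and> card (Aopt i) > k}.
                                  util v i (Aopt i) / real (card (Aopt i))))
       \<and> (1 + (\<Sum>i \<in> {i. i < n \<and> card (Aopt i) > k}. util v i (Aopt i)))
             / (1 + real k * (\<Sum>i \<in> {i. i < n \<and> card (Aopt i) > k}.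
                                  util v i (Aopt i) / real (card (Aopt i))))
         \<le> (let s = -1 + sqrt (1 + (real m - 1) / real k)
            in (1 + s) / (1 + real k * s\<^sup>2 / (real m - 1)))"
proof -
  define S where "S = {i. i < n \<and> card (Aopt i) > k}"
  define \<sigma> where "\<sigma> = (\<Sum>i\<in>S. util v i (Aopt i))"
  define \<tau> where "\<tau> = (\<Sum>i\<in>S. util v i (Aopt i) / real (card (Aopt i)))"
  have util_S: "0 \<le> util v i (Aopt i) \<and> util v i (Aopt i) \<le> 1" if "i \<in> S" for i
  proof -
    have "i < n" using that by (simp add: S_def)
    then show ?thesis
      using S_bound[OF that[unfolded S_def]]
        util_bundle_nonneg[where v = v, OF opt_alloc nonneg \<open>i < n\<close>]
        util_bundle_le_util_goods[where v = v, OF opt_alloc nonneg \<open>i < n\<close>]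
      by linarith
  qed
  obtain j where "j < n" "j \<notin> S" "Aopt j \<noteq> {}"
  proof -
    have "(\<Sum>i \<in> {i. i < n \<and> \<not> card (Aopt i) > k}. util v i (Aopt i)) \<noteq> 0"
      using rest by linarith
    then obtain j where "j \<in> {i. i < n \<and> \<not> card (Aopt i) > k}" "util v j (Aopt j) \<noteq> 0"
      by (meson sum.neutral)
    then show thesis using that by (metis S_def mem_Collect_eq sum.empty util_def)
  qed
  then have "(\<Sum>i\<in>S. card (Aopt i)) < m"
    by (intro sum_card_bundles_less[OF opt_alloc]) (auto simp: S_def)
  then have "(\<Sum>i\<in>S. real (card (Aopt i))) \<le> real m - 1"
    unfolding of_nat_sum[symmetric] by linarith
  then have "\<sigma>\<^sup>2 \<le> \<tau> * (real m - 1)"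
    unfolding \<sigma>_def \<tau>_def using util_S
    by (intro sum_squared_le_sum_divide_mult_bound) (auto simp: S_def)
  moreover have "0 \<le> \<sigma>" "0 \<le> \<tau>" using util_S unfolding \<sigma>_def \<tau>_def by (auto intro!: sum_nonneg)
  ultimately have "(1 + \<sigma>) / (1 + real k * \<tau>)
      \<le> (let s = -1 + sqrt (1 + (real m - 1) / real k) in (1 + s) / (1 + real k * s\<^sup>2 / (real m - 1)))"
    using \<open>0 < k\<close> \<open>k < m\<close> by (intro one_add_divide_le_critical_value) auto
  then show ?thesis
    using OPT_USW_div_max_cardinal_USW_le[OF \<open>m \<le> k * n\<close> nonneg opt_alloc opt rest]
    unfolding \<sigma>_def \<tau>_def S_def by blast
qed

end
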